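(* For all real $a,r$ with $0<a<1$, $0<r<1$ and $a\neq r$, $$\frac12(a^2+1)^2\left[\frac{1}{(ar+1)^2(a-r)^2}+\frac{1}{(r+a)^2(ar-1)^2}\right]-\frac{(1-r^2)r}{(1+r^2)^4}>0.$$ *)

theory Defs
  imports Complex_Main
begin

end

theory Submission
  imports Defs
begin

text \<open>Both denominators in the bracket are products of a square below 4 and a square below 1,
  so each reciprocal exceeds 1/4 and, as \<open>(a\<^sup>2 + 1)\<^sup>2 \<ge> 1\<close>, the first term exceeds 1/4.
  The subtracted term stays below 1/4 because \<open>4 r (1 - r\<^sup>2) \<le> 4 r \<le> 1 + 4 r\<^sup>2 \<le> (1 + r\<^sup>2)\<^sup>4\<close>,
  with one of the inequalities strict.\<close>

lemma quarter_less_inverse_square_mult: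
  fixes u v :: real
  assumes "\<bar>u\<bar> < 2" "\<bar>v\<bar> < 1" "u \<noteq> 0" "v \<noteq> 0"
  shows "1/4 < 1 / (u^2 * v^2)"
proof -
  have "\<bar>u * v\<bar> < 2"
    using mult_strict_mono[of "\<bar>u\<bar>" 2 "\<bar>v\<bar>" 1] assms by (simp add: abs_mult)
  then have "(u * v)^2 < 2^2"
    using power_strict_mono[of "\<bar>u * v\<bar>" 2 2] by simp
  moreover have "0 < (u * v)^2"
    using assms by simp
  ultimately show ?thesis
    by (simp add: power_mult_distrib divide_simps)
qed

lemma cubic_div_one_plus_square_pow4_less_quarter:
  fixes r :: real
  assumes "0 \<le> r"
  shows "(1 - r^2) * r / (1 + r^2)^4 < 1/4"
proof -
  have "0 < (2*r - 1)^2 + 4*r^3"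
    using assms by (cases "r = 1/2") (auto intro: add_pos_nonneg add_nonneg_pos)
  then have "4 * ((1 - r^2) * r) < 1 + 4*r^2"
    by (simp add: power2_eq_square power3_eq_cube algebra_simps)
  also have "\<dots> \<le> (1 + r^2)^4"
  proof -
    have "(1 + r^2)^4 = 1 + 4*r^2 + 6*r^4 + 4*r^6 + r^8"
      by algebra
    then show ?thesis
      by (simp add: zero_le_even_power)
  qed
  finally show ?thesis
    by (simp add: divide_simps add_pos_nonneg)
qed

theorem lemma1:
  fixes a r :: real
  assumes "0 < a" "a < 1" "0 < r" "r < 1" "a \<noteq> r"
  shows "1/2 * (a^2 + 1)^2 * (1 / ((a*r + 1)^2 * (a - r)^2) + 1 / ((r + a)^2 * (a*r - 1)^2))
           - (1 - r^2) * r / (1 + r^2)^4 > 0"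
proof -
  let ?S = "1 / ((a*r + 1)^2 * (a - r)^2) + 1 / ((r + a)^2 * (a*r - 1)^2)"
  have ar: "0 < a * r" "a * r < 1"
    using assms mult_strict_mono[of a 1 r 1] by auto
  have "1/4 < 1 / ((a*r + 1)^2 * (a - r)^2)"
    by (intro quarter_less_inverse_square_mult) (use assms ar in arith)+
  moreover have "1/4 < 1 / ((r + a)^2 * (a*r - 1)^2)"
    by (intro quarter_less_inverse_square_mult) (use assms ar in arith)+
  ultimately have "1/4 < 1/2 * ?S"
    by simp
  also have "\<dots> \<le> 1/2 * (a^2 + 1)^2 * ?S"
    using calculation mult_right_mono[of 1 "(a^2 + 1)^2" "1/2 * ?S"]
    by (simp add: one_le_power)
  finally show ?thesis
    using cubic_div_one_plus_square_pow4_less_quarter[of r] assms by linarith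
qed

end
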